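(* Let $t \in \mathbb{N}_0$ and $b \in \mathbb{N}$ be such that $\Phi_b(x)$ divides the polynomial $T_t(x)$ below. Then $b/\mathrm{rad}(b) < 13$, where \begin{align*} T_t(x) = {}& x^{8t+27} + x^{8t+26} + x^{8t+25} + x^{8t+22} + x^{8t+20} + x^{8t+18} + x^{8t+17} - x^{8t+16} - x^{8t+15} + 2x^{6t+15} \\ & - x^{4t+26} - x^{4t+25} + x^{4t+23} - x^{4t+21} - x^{4t+20} + x^{4t+19} - x^{4t+18} - x^{4t+17} + 3x^{4t+14} - 3x^{4t+13} \\ & + x^{4t+10} + x^{4t+9} - x^{4t+8} + x^{4t+7} + x^{4t+6} - x^{4t+4} + x^{4t+2} + x^{4t+1} - 2x^{2t+12} \\ & + x^{12} + x^{11} - x^{10} - x^9 - x^7 - x^5 - x^2 - x - 1. \end{align*}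
   Context: $\Phi_b(x)$ is the $b$-th cyclotomic polynomial (the monic polynomial whose roots are exactly the primitive $b$-th roots of unity, each simple). $\mathrm{rad}(b)$ denotes the product of the distinct prime divisors of $b$ (the largest square-free divisor of $b$). *)

theory Defs
  imports "HOL-Analysis.Analysis" "HOL-Computational_Algebra.Computational_Algebra"
begin

definition cyclotomic :: "nat \<Rightarrow> complex poly" where
  "cyclotomic b = (\<Prod>k\<in>{k. k < b \<and> coprime k b}.
      [:- cis (2 * pi * real k / real b), 1:])"

definition rad :: "nat \<Rightarrow> nat" where
  "rad b = (\<Prod>p\<in>prime_factors b. p)"

definition T_poly :: "nat \<Rightarrow> complex poly" where
  "T_poly t =
      monom 1 (8*t+27) + monom 1 (8*t+26) + monom 1 (8*t+25) + monom 1 (8*t+22)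
    + monom 1 (8*t+20) + monom 1 (8*t+18) + monom 1 (8*t+17) - monom 1 (8*t+16)
    - monom 1 (8*t+15) + monom 2 (6*t+15)
    - monom 1 (4*t+26) - monom 1 (4*t+25) + monom 1 (4*t+23) - monom 1 (4*t+21)
    - monom 1 (4*t+20) + monom 1 (4*t+19) - monom 1 (4*t+18) - monom 1 (4*t+17)
    + monom 3 (4*t+14) - monom 3 (4*t+13)
    + monom 1 (4*t+10) + monom 1 (4*t+9) - monom 1 (4*t+8) + monom 1 (4*t+7)
    + monom 1 (4*t+6) - monom 1 (4*t+4) + monom 1 (4*t+2) + monom 1 (4*t+1)
    - monom 2 (2*t+12)
    + monom 1 12 + monom 1 11 - monom 1 10 - monom 1 9 - monom 1 7 - monom 1 5
    - monom 1 2 - monom 1 1 - 1"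

end

theory Submission
  imports Defs "HOL-Library.Real_Mod"
begin

text \<open>
  Let \<open>n = b / rad b\<close>, \<open>\<zeta> = exp (2\<pi>i / b)\<close> and \<open>\<omega> = exp (2\<pi>i / n)\<close>. Every \<open>\<zeta> \<omega>^k\<close> is a
  primitive \<open>b\<close>-th root of unity, because \<open>1 + k rad b\<close> is coprime to \<open>b\<close>; so if \<open>\<Phi>_b\<close> divides a
  polynomial, averaging its values at these points shows that for every residue \<open>r\<close> mod \<open>n\<close> the
  terms whose exponent is \<open>\<equiv> r\<close> already sum to zero at \<open>\<zeta>\<close>. In particular no term can outweigh
  the other terms of its residue class.

  For \<open>n \<ge> 13\<close> a finite computation on the 38 terms of \<open>T_t\<close> finds such a dominant term: by a
  table of witnesses indexed by \<open>n\<close> and \<open>t mod n\<close> when \<open>n < 26\<close>, and for \<open>n \<ge> 26\<close> because some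
  exponent is alone in its class. The only exceptions are \<open>n = 13\<close>, \<open>t \<equiv> 6, 12 (mod 13)\<close>: there a
  class consists of two terms \<open>\<plusminus>x^e\<close> and \<open>\<plusminus>x^(e + 13)\<close>, which forces \<open>\<zeta>^26 = 1\<close>, i.e.
  \<open>b dvd 26\<close>, contradicting \<open>13^2 dvd b\<close>.
\<close>

section \<open>Radicals and roots of unity\<close>

lemma rad_pos: "0 < rad b"
  by (auto simp: rad_def intro!: prod_pos dest: in_prime_factors_imp_prime prime_gt_0_nat)

lemma rad_dvd: "rad b dvd b"
proof (cases "b = 0")
  case False
  have "rad b dvd (\<Prod>p\<in>prime_factors b. p ^ multiplicity p b)"
    unfolding rad_def by (rule prod_dvd_prod) (auto simp: prime_factors_multiplicity)
  also have "\<dots> = b" using False by (simp add: prod_prime_factors)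
  finally show ?thesis .
qed simp

lemma prime_dvd_rad: "prime p \<Longrightarrow> p dvd b \<Longrightarrow> b \<noteq> 0 \<Longrightarrow> p dvd rad b"
  unfolding rad_def by (auto simp: prime_factors_dvd intro: dvd_prodI)

lemma coprime_one_plus_mult_rad:
  assumes "b \<noteq> 0"
  shows "coprime (1 + k * rad b) b"
proof (rule ccontr)
  assume "\<not> coprime (1 + k * rad b) b"
  then obtain c where c: "c dvd 1 + k * rad b" "c dvd b" "c \<noteq> 1"
    by (auto elim: not_coprimeE)
  then obtain p where p: "prime p" "p dvd 1 + k * rad b" "p dvd b"
    by (metis prime_factor_nat dvd_trans)
  then have "p dvd 1"
    using assms prime_dvd_rad by (metis dvd_add_right_iff dvd_mult add.commute)
  with p show False by simp
qed

lemma poly_cyclotomic_cis_eq_0: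
  assumes "0 < b" "coprime k b"
  shows "poly (cyclotomic b) (cis (2 * pi * real k / real b)) = 0"
proof -
  have "real k = real (k mod b) + real b * real (k div b)"
    by (simp flip: of_nat_mult of_nat_add)
  then have "2 * pi * real k / real b = 2 * pi * real (k mod b) / real b + 2 * pi * real (k div b)"
    using assms(1) by (simp add: field_simps)
  then have "cis (2 * pi * real k / real b) = cis (2 * pi * real (k mod b) / real b)"
    by (simp add: cis_mult[symmetric])
  moreover have "k mod b \<in> {k. k < b \<and> coprime k b}"
    using assms by simp
  ultimately show ?thesis
    unfolding cyclotomic_def poly_prod by (intro prod_zero) auto
qed

lemma cis_eq_1_imp_dvd:
  assumes "0 < b" "cis (2 * pi * real m / real b) = 1"
  shows "b dvd m"
proof -
  obtain q where "2 * pi * real m / real b = of_int q * (2 * pi)"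
    using assms(2) cis_eq_1_iff by blast
  then have "int m = q * int b"
    using assms(1) by (simp add: field_simps) (metis of_int_eq_iff of_int_mult of_int_of_nat_eq)
  then show ?thesis by (metis dvd_triv_right int_dvd_int_iff)
qed

lemma sum_cis_power_mult:
  assumes "0 < n"
  shows "(\<Sum>k<n. cis (2 * pi / real n) ^ (k * m)) = (if n dvd m then of_nat n else 0)"
proof -
  define w where "w = cis (2 * pi / real n) ^ m"
  have w: "w = cis (2 * pi * real m / real n)"
    by (simp add: w_def Complex.DeMoivre field_simps)
  have "w ^ n = 1"
    using assms by (simp add: w Complex.DeMoivre)
  moreover have "w = 1 \<longleftrightarrow> n dvd m"
  proof
    assume "n dvd m"
    then obtain k where "m = n * k" ..
    then have "2 * pi * real m / real n = 2 * pi * real k"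
      using assms by simp
    then show "w = 1"
      by (simp only: w cis_multiple_2pi Ints_of_nat)
  qed (use assms cis_eq_1_imp_dvd w in simp)
  ultimately show ?thesis
    by (auto simp: mult.commute[of _ m] power_mult geometric_sum simp flip: w_def)
qed

lemma dvd_add_diff_iff_mod_eq:
  fixes e n r :: nat
  assumes "r < n"
  shows "n dvd e + (n - r) \<longleftrightarrow> e mod n = r"
proof -
  define x where "x = e mod n"
  have "x < n" using assms by (simp add: x_def)
  have "n dvd e + (n - r) \<longleftrightarrow> (x + (n - r)) mod n = 0"
    by (simp add: x_def dvd_eq_mod_eq_0 mod_add_left_eq)
  also have "\<dots> \<longleftrightarrow> x = r"
  proof (cases "x < r")
    case True
    then show ?thesis using assms by simp
  next
    case False
    then have "x + (n - r) = (x - r) + n" using assms by simp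
    then have "(x + (n - r)) mod n = x - r"
      by (simp only: mod_add_self2) (use \<open>x < n\<close> in simp)
    then show ?thesis using False by simp
  qed
  finally show ?thesis by (simp add: x_def)
qed

section \<open>Vanishing of residue classes\<close>

lemma rad_quotient_pos: "0 < b \<Longrightarrow> 0 < b div rad b"
  using rad_dvd[of b] by (metis dvd_div_eq_0_iff gr0I not_gr0)

lemma poly_eq_0_at_rad_shifted_roots:
  assumes "0 < b" "cyclotomic b dvd p"
  shows "poly p (cis (2 * pi / real b) * cis (2 * pi / real (b div rad b)) ^ k) = 0"
proof -
  define n where "n = b div rad b"
  have "real b = real n * real (rad b)"
    using rad_dvd[of b] by (simp add: n_def flip: of_nat_mult)
  then have "cis (2 * pi / real b) * cis (2 * pi / real n) ^ k
      = cis (2 * pi * real (1 + k * rad b) / real b)"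
    using rad_pos[of b] rad_quotient_pos[OF assms(1)]
    by (simp add: Complex.DeMoivre cis_mult n_def field_simps)
  moreover have "poly (cyclotomic b) (cis (2 * pi * real (1 + k * rad b) / real b)) = 0"
    using assms(1) by (intro poly_cyclotomic_cis_eq_0 coprime_one_plus_mult_rad) auto
  ultimately show ?thesis
    using assms(2) by (auto simp: n_def elim!: dvdE)
qed

text \<open>The points \<open>\<zeta> \<omega>^k\<close> are roots of \<open>p\<close>; weighting the \<open>k\<close>-th value by \<open>\<omega>^(k (n - r))\<close>
  and summing over \<open>k < n\<close> keeps exactly the terms with exponent \<open>\<equiv> r (mod n)\<close>.\<close>

lemma residue_class_sum_eq_0:
  fixes c :: "'a \<Rightarrow> complex" and e :: "'a \<Rightarrow> nat"
  assumes "0 < b" "cyclotomic b dvd p" "finite J"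
    and poly_p: "\<And>z. poly p z = (\<Sum>j\<in>J. c j * z ^ e j)"
    and r: "r < b div rad b"
  shows "(\<Sum>j | j \<in> J \<and> e j mod (b div rad b) = r. c j * cis (2 * pi / real b) ^ e j) = 0"
proof -
  define n where "n = b div rad b"
  define \<zeta> where "\<zeta> = cis (2 * pi / real b)"
  define \<omega> where "\<omega> = cis (2 * pi / real n)"
  have "r < n" using r by (simp add: n_def)
  have summand: "\<omega> ^ (k * (n - r)) * (c j * (\<zeta> * \<omega> ^ k) ^ e j)
      = c j * \<zeta> ^ e j * \<omega> ^ (k * (e j + (n - r)))" for k j
  proof -
    have "(\<zeta> * \<omega> ^ k) ^ e j = \<zeta> ^ e j * \<omega> ^ (k * e j)"
      by (simp add: power_mult_distrib power_mult)
    moreover have "\<omega> ^ (k * (e j + (n - r))) = \<omega> ^ (k * e j) * \<omega> ^ (k * (n - r))"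
      by (simp add: distrib_left power_add)
    ultimately show ?thesis by (simp add: ac_simps)
  qed
  have "0 = (\<Sum>k<n. \<omega> ^ (k * (n - r)) * poly p (\<zeta> * \<omega> ^ k))"
    using poly_eq_0_at_rad_shifted_roots[OF assms(1,2)] by (simp add: \<zeta>_def \<omega>_def n_def)
  also have "\<dots> = (\<Sum>k<n. \<Sum>j\<in>J. c j * \<zeta> ^ e j * \<omega> ^ (k * (e j + (n - r))))"
    by (simp only: poly_p sum_distrib_left summand)
  also have "\<dots> = (\<Sum>j\<in>J. c j * \<zeta> ^ e j * (\<Sum>k<n. \<omega> ^ (k * (e j + (n - r)))))"
    by (subst sum.swap) (simp only: sum_distrib_left)
  also have "\<dots> = (\<Sum>j\<in>J. if e j mod n = r then of_nat n * (c j * \<zeta> ^ e j) else 0)"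
  proof -
    have "(\<Sum>k<n. \<omega> ^ (k * (e j + (n - r)))) = (if e j mod n = r then of_nat n else 0)" for j
      using \<open>r < n\<close> by (simp only: \<omega>_def sum_cis_power_mult dvd_add_diff_iff_mod_eq)
    then show ?thesis by (intro sum.cong refl) (simp add: ac_simps)
  qed
  also have "\<dots> = of_nat n * (\<Sum>j | j \<in> J \<and> e j mod n = r. c j * \<zeta> ^ e j)"
    using assms(3) by (auto simp: sum.inter_filter sum_distrib_left intro!: sum.cong)
  finally show ?thesis
    using \<open>r < n\<close> by (simp add: n_def \<zeta>_def)
qed

lemma residue_class_norm_le:
  fixes c :: "'a \<Rightarrow> complex" and e :: "'a \<Rightarrow> nat"
  assumes "0 < b" "cyclotomic b dvd p" "finite J"
    and "\<And>z. poly p z = (\<Sum>j\<in>J. c j * z ^ e j)"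
    and "i \<in> J"
  defines "n \<equiv> b div rad b"
  shows "norm (c i) \<le> (\<Sum>j | j \<in> J \<and> j \<noteq> i \<and> e j mod n = e i mod n. norm (c j))"
proof -
  define \<zeta> where "\<zeta> = cis (2 * pi / real b)"
  define C where "C = {j. j \<in> J \<and> e j mod n = e i mod n}"
  have "finite C" "i \<in> C" using assms(3,5) by (auto simp: C_def)
  have "(\<Sum>j\<in>C. c j * \<zeta> ^ e j) = 0"
    using residue_class_sum_eq_0[OF assms(1-4)] rad_quotient_pos[OF assms(1)]
    by (simp add: C_def \<zeta>_def n_def)
  moreover have "(\<Sum>j\<in>C. c j * \<zeta> ^ e j) = c i * \<zeta> ^ e i + (\<Sum>j\<in>C - {i}. c j * \<zeta> ^ e j)"
    using \<open>finite C\<close> \<open>i \<in> C\<close> by (rule sum.remove)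
  ultimately have "c i * \<zeta> ^ e i = - (\<Sum>j\<in>C - {i}. c j * \<zeta> ^ e j)"
    by (simp add: eq_neg_iff_add_eq_0)
  have unit: "norm (c j * \<zeta> ^ e j) = norm (c j)" for j
    by (simp add: \<zeta>_def norm_mult norm_power)
  have "norm (c i) = norm (\<Sum>j\<in>C - {i}. c j * \<zeta> ^ e j)"
    using \<open>c i * \<zeta> ^ e i = _\<close> unit[of i] by simp
  also have "\<dots> \<le> (\<Sum>j\<in>C - {i}. norm (c j * \<zeta> ^ e j))"
    by (rule norm_sum)
  also have "\<dots> = (\<Sum>j\<in>C - {i}. norm (c j))"
    by (simp only: unit)
  also have "C - {i} = {j. j \<in> J \<and> j \<noteq> i \<and> e j mod n = e i mod n}"
    by (auto simp: C_def)
  finally show ?thesis .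
qed

lemma two_term_residue_class_dvd:
  fixes c :: "'a \<Rightarrow> complex" and e :: "'a \<Rightarrow> nat"
  assumes "0 < b" "cyclotomic b dvd p" "finite J"
    and "\<And>z. poly p z = (\<Sum>j\<in>J. c j * z ^ e j)"
    and residue_class: "{j \<in> J. e j mod (b div rad b) = e i mod (b div rad b)} = {i, i'}" "i \<noteq> i'"
    and "e i' = e i + m" "c i ^ 2 = c i' ^ 2" "c i' \<noteq> 0"
  shows "b dvd 2 * m"
proof -
  define \<zeta> where "\<zeta> = cis (2 * pi / real b)"
  have "(\<Sum>j | j \<in> J \<and> e j mod (b div rad b) = e i mod (b div rad b). c j * \<zeta> ^ e j) = 0"
    using residue_class_sum_eq_0[OF assms(1-4)] rad_quotient_pos[OF assms(1)] by (simp add: \<zeta>_def)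
  then have "\<zeta> ^ e i * (c i + c i' * \<zeta> ^ m) = 0"
    using residue_class by (simp add: assms(7) power_add algebra_simps)
  then have "c i' * \<zeta> ^ m = - c i"
    by (simp add: \<zeta>_def eq_neg_iff_add_eq_0 add.commute)
  then have "c i' ^ 2 * \<zeta> ^ (2 * m) = c i' ^ 2"
    using assms(8) by (metis power_mult_distrib power_mult mult.commute power2_minus)
  then have "cis (2 * pi * real (2 * m) / real b) = 1"
    using assms(9) by (simp add: \<zeta>_def Complex.DeMoivre field_simps)
  then show ?thesis
    using assms(1) by (rule cis_eq_1_imp_dvd[rotated])
qed

section \<open>The terms of \<open>T_t\<close>\<close>

text \<open>\<open>(c, A, D)\<close> stands for the term \<open>c x^(A t + D)\<close> of \<open>T_t\<close>.\<close>

definition T_terms :: "(int \<times> nat \<times> nat) list" where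
  "T_terms = [(1,8,27), (1,8,26), (1,8,25), (1,8,22), (1,8,20), (1,8,18), (1,8,17), (-1,8,16),
    (-1,8,15), (2,6,15), (-1,4,26), (-1,4,25), (1,4,23), (-1,4,21), (-1,4,20), (1,4,19),
    (-1,4,18), (-1,4,17), (3,4,14), (-3,4,13), (1,4,10), (1,4,9), (-1,4,8), (1,4,7), (1,4,6),
    (-1,4,4), (1,4,2), (1,4,1), (-2,2,12), (1,0,12), (1,0,11), (-1,0,10), (-1,0,9), (-1,0,7),
    (-1,0,5), (-1,0,2), (-1,0,1), (-1,0,0)]"

fun term_coeff :: "int \<times> nat \<times> nat \<Rightarrow> int" where
  "term_coeff (c, A, D) = c"

fun term_exp :: "nat \<Rightarrow> int \<times> nat \<times> nat \<Rightarrow> nat" where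
  "term_exp t (c, A, D) = A * t + D"

lemma distinct_T_terms: "distinct T_terms"
  by (simp add: T_terms_def)

lemma poly_T_poly: "poly (T_poly t) z = (\<Sum>x\<in>set T_terms. of_int (term_coeff x) * z ^ term_exp t x)"
proof -
  have "poly (T_poly t) z = (\<Sum>x\<leftarrow>T_terms. of_int (term_coeff x) * z ^ term_exp t x)"
    by (simp add: T_poly_def T_terms_def poly_monom algebra_simps power2_eq_square)
  then show ?thesis
    by (simp add: sum_list_distinct_conv_sum_set distinct_T_terms)
qed

lemma term_exp_mod: "term_exp t x mod n = term_exp (t mod n) x mod n"
  by (cases x) (simp, metis mod_add_left_eq mod_mult_right_eq)

section \<open>Dominant terms\<close>

definition dominant :: "nat \<Rightarrow> nat \<Rightarrow> int \<times> nat \<times> nat \<Rightarrow> bool" where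
  "dominant n t x \<longleftrightarrow> (let r = term_exp t x mod n in
     (\<Sum>y\<leftarrow>filter (\<lambda>y. y \<noteq> x \<and> term_exp t y mod n = r) T_terms. \<bar>term_coeff y\<bar>)
       < \<bar>term_coeff x\<bar>)"

lemma dominant_iff:
  "dominant n t x \<longleftrightarrow>
     (\<Sum>y | y \<in> set T_terms \<and> y \<noteq> x \<and> term_exp t y mod n = term_exp t x mod n. \<bar>term_coeff y\<bar>)
       < \<bar>term_coeff x\<bar>"
  by (simp add: dominant_def sum_list_distinct_conv_sum_set distinct_T_terms)

lemma dominant_mod: "dominant n (t mod n) x = dominant n t x"
  by (simp add: dominant_def term_exp_mod[of t])

lemma not_dominant:
  assumes "0 < b" "cyclotomic b dvd T_poly t" "x \<in> set T_terms"
  shows "\<not> dominant (b div rad b) t x"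
  using residue_class_norm_le[where c = "\<lambda>x. of_int (term_coeff x)" and e = "term_exp t",
      OF assms(1,2) finite_set poly_T_poly assms(3)]
  by (simp add: dominant_iff not_less flip: of_int_abs of_int_sum)

text \<open>Row \<open>n - 13\<close>, entry \<open>s\<close>: the position in \<open>T_terms\<close> of a dominant term for \<open>t mod n = s\<close>
  (the entries for the two exceptional residues mod 13 are placeholders).\<close>

definition dominant_witnesses :: "nat list list" where
  "dominant_witnesses =
    [[7,11,7,16,1,18,0,18,5,0,8,9,0], [18,18,18,15,11,9,17,18,18,18,15,11,9,17],
     [18,1,3,10,1,16,9,6,2,18,16,7,0,4,7], [9,0,4,7,8,0,4,7,9,0,4,7,8,0,4,7],
     [7,2,18,7,6,1,1,9,5,0,1,3,18,9,0,4,7], [7,1,1,5,5,0,0,4,7,7,1,1,5,5,0,0,4,7],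
     [3,0,1,3,16,8,1,1,9,1,9,2,18,7,6,0,0,4,1], [7,0,0,4,7,7,0,0,4,7,7,0,0,4,7,7,0,0,4,7],
     [7,18,2,10,7,6,10,1,1,9,5,9,0,1,3,13,8,0,0,4,7],
     [7,5,1,1,5,5,18,0,0,4,1,7,5,1,1,5,5,18,0,0,4,1],
     [3,5,0,1,3,2,0,6,1,1,9,5,9,14,2,9,0,6,9,0,0,4,1],
     [0,4,0,0,4,1,3,4,0,0,4,1,0,4,0,0,4,1,3,4,0,0,4,1],
     [3,4,3,2,9,0,2,0,6,1,1,9,1,4,7,0,1,3,0,8,15,0,0,4,1]]"

lemma dominant_witnesses_correct:
  "list_all (\<lambda>(n, ws). length ws = n \<and>
     list_all (\<lambda>(s, w). (n = 13 \<and> (s = 6 \<or> s = 12)) \<or>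
         (w < length T_terms \<and> dominant n s (T_terms ! w)))
       (zip [0..<n] ws))
   (zip [13..<26] dominant_witnesses)"
  by code_simp

lemma list_all_zip_upt_nth:
  assumes "list_all P (zip [a..<b] xs)" "length xs = b - a" "a \<le> n" "n < b"
  shows "P (n, xs ! (n - a))"
proof -
  have "zip [a..<b] xs ! (n - a) = (n, xs ! (n - a))" "n - a < length (zip [a..<b] xs)"
    using assms(2-4) by simp_all
  then show ?thesis
    using assms(1) by (metis list_all_length)
qed

lemma exists_dominant_term_below_26:
  assumes "13 \<le> n" "n < 26" "n = 13 \<longrightarrow> t mod 13 \<noteq> 6 \<and> t mod 13 \<noteq> 12"
  shows "\<exists>x\<in>set T_terms. dominant n t x"
proof -
  have "length dominant_witnesses = 26 - 13"
    by (simp add: dominant_witnesses_def)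
  then obtain ws where "length ws = n"
    and row: "list_all (\<lambda>(s, w). (n = 13 \<and> (s = 6 \<or> s = 12)) \<or>
        (w < length T_terms \<and> dominant n s (T_terms ! w))) (zip [0..<n] ws)"
    using list_all_zip_upt_nth[OF dominant_witnesses_correct _ assms(1,2)] by auto
  then have "ws ! (t mod n) < length T_terms \<and>
      dominant n (t mod n) (T_terms ! (ws ! (t mod n)))"
    using list_all_zip_upt_nth[OF row, of "t mod n"] assms \<open>length ws = n\<close> by auto
  then show ?thesis
    by (auto simp: dominant_mod)
qed

fun term_gap :: "int \<times> nat \<times> nat \<Rightarrow> int \<times> nat \<times> nat \<Rightarrow> int \<times> int" where
  "term_gap (c, A, D) (c', A', D') = (int A' - int A, int D' - int D)"

lemma term_exp_mod_eq_iff: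
  "term_exp t y mod n = term_exp t x mod n \<longleftrightarrow>
     int n dvd fst (term_gap x y) * int t + snd (term_gap x y)"
proof -
  have "term_exp t y mod n = term_exp t x mod n \<longleftrightarrow> int n dvd int (term_exp t y) - int (term_exp t x)"
    by (metis of_nat_eq_iff zmod_int mod_eq_dvd_iff)
  also have "int (term_exp t y) - int (term_exp t x) = fst (term_gap x y) * int t + snd (term_gap x y)"
    by (cases x; cases y) (simp add: algebra_simps)
  finally show ?thesis .
qed

fun eliminate :: "int \<times> int \<Rightarrow> int \<times> int \<Rightarrow> int" where
  "eliminate (a, d) (a', d') = a' div gcd a a' * d - a div gcd a a' * d'"

lemma dvd_eliminate:
  fixes a d a' d' t :: int
  assumes "m dvd a * t + d" "m dvd a' * t + d'"
  shows "m dvd eliminate (a, d) (a', d')"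
proof -
  have "a' div gcd a a' * a = a div gcd a a' * a'"
    by (metis dvd_div_mult_self dvd_div_mult gcd_dvd1 gcd_dvd2 mult.commute)
  then have "eliminate (a, d) (a', d') = a' div gcd a a' * (a * t + d) - a div gcd a a' * (a' * t + d')"
    by (simp add: algebra_simps)
  then show ?thesis
    using assms by simp
qed

definition small_nonzero :: "int \<Rightarrow> int \<Rightarrow> bool" where
  "small_nonzero N c \<longleftrightarrow> c \<noteq> 0 \<and> \<bar>c\<bar> < N"

lemma small_nonzero_not_dvd:
  assumes "small_nonzero N c" "N \<le> int n"
  shows "\<not> int n dvd c"
proof
  assume "int n dvd c"
  then have "\<bar>int n\<bar> \<le> \<bar>c\<bar>"
    using assms(1) by (intro dvd_imp_le_int) (simp_all add: small_nonzero_def)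
  then show False
    using assms by (simp add: small_nonzero_def)
qed

text \<open>
  Suppose the term \<open>x\<close> shares its residue class mod \<open>n \<ge> N\<close> with \<open>y\<close>. If both have the same slope,
  \<open>n\<close> divides the difference of their offsets, which \<open>separated_by\<close> checks to be small and
  nonzero. Otherwise the certificate names a pivot \<open>w\<close>: eliminating \<open>t\<close> between the congruence of
  \<open>x, y\<close> and that of \<open>w\<close> with any other term gives a small nonzero multiple of \<open>n\<close>, so \<open>w\<close> is
  alone in its class.
\<close>

definition pivot_isolates :: "int \<Rightarrow> int \<times> int \<Rightarrow> int \<times> nat \<times> nat \<Rightarrow> bool" where
  "pivot_isolates N g w \<longleftrightarrow>
     list_all (\<lambda>z. z = w \<or> small_nonzero N (eliminate g (term_gap w z))) T_terms"

definition separated_by :: "int \<Rightarrow> int \<times> nat \<times> nat \<Rightarrow> int \<times> nat \<times> nat \<Rightarrow> nat \<Rightarrow> bool" where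
  "separated_by N x y k \<longleftrightarrow> y = x \<or>
     (let g = term_gap x y in
      if fst g = 0 then small_nonzero N (snd g)
      else k < length T_terms \<and> pivot_isolates N g (T_terms ! k))"

definition isolation_certificate :: "int \<Rightarrow> nat \<Rightarrow> nat list \<Rightarrow> bool" where
  "isolation_certificate N i pivots \<longleftrightarrow>
     i < length T_terms \<and> list_all2 (separated_by N (T_terms ! i)) T_terms pivots"

lemma isolation_certificate_imp_isolated:
  assumes cert: "isolation_certificate N i pivots" and "N \<le> int n"
  shows "\<exists>x\<in>set T_terms. \<forall>y\<in>set T_terms. y \<noteq> x \<longrightarrow> term_exp t y mod n \<noteq> term_exp t x mod n"
proof (rule ccontr)
  assume no_isolated: "\<not> ?thesis"
  define x where "x = T_terms ! i"
  have "x \<in> set T_terms"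
    using cert by (simp add: x_def isolation_certificate_def)
  then obtain y where "y \<in> set T_terms" "y \<noteq> x" "term_exp t y mod n = term_exp t x mod n"
    using no_isolated by blast
  then obtain j where j: "j < length T_terms" "T_terms ! j = y" "y \<noteq> x"
      and x_dvd: "int n dvd fst (term_gap x y) * int t + snd (term_gap x y)"
    by (auto simp: in_set_conv_nth term_exp_mod_eq_iff)
  define g where "g = term_gap x y"
  define w where "w = T_terms ! (pivots ! j)"
  have "list_all2 (separated_by N x) T_terms pivots"
    using cert by (simp add: isolation_certificate_def x_def)
  then have "separated_by N x y (pivots ! j)"
    using j(1,2) list_all2_nthD by fastforce
  then have entry: "if fst g = 0 then small_nonzero N (snd g)
      else pivots ! j < length T_terms \<and> pivot_isolates N g w"
    using j(3) by (simp add: separated_by_def g_def w_def Let_def)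
  show False
  proof (cases "fst g = 0")
    case True
    then show False
      using entry x_dvd small_nonzero_not_dvd[OF _ assms(2)] by (simp add: g_def)
  next
    case False
    then have "w \<in> set T_terms" and isolates: "pivot_isolates N g w"
      using entry by (simp_all add: w_def)
    then obtain z where "z \<in> set T_terms" "z \<noteq> w"
        and w_dvd: "int n dvd fst (term_gap w z) * int t + snd (term_gap w z)"
      using no_isolated by (auto simp: term_exp_mod_eq_iff)
    then have "small_nonzero N (eliminate g (term_gap w z))"
      using isolates by (auto simp: pivot_isolates_def list_all_iff)
    moreover have "int n dvd eliminate g (term_gap w z)"
      using dvd_eliminate[OF x_dvd w_dvd] by (simp add: g_def)
    ultimately show False
      using small_nonzero_not_dvd[OF _ assms(2)] by blast
  qed
qed

lemma isolation_certificate_26: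
  "isolation_certificate 26 14
     [3, 12, 0, 1, 3, 4, 17, 16, 15, 18, 0, 0, 0, 0, 0, 0, 0, 0, 0, 0, 0, 0, 0, 0, 0, 0, 0, 0, 0,
      4, 12, 1, 1, 2, 0, 17, 16, 17]"
  by code_simp

lemma exists_dominant_term:
  assumes "13 \<le> n" "n = 13 \<longrightarrow> t mod 13 \<noteq> 6 \<and> t mod 13 \<noteq> 12"
  shows "\<exists>x\<in>set T_terms. dominant n t x"
proof (cases "n < 26")
  case True
  then show ?thesis using assms exists_dominant_term_below_26 by blast
next
  case False
  then have "26 \<le> int n" by simp
  then obtain x where x: "x \<in> set T_terms"
      and isolated: "\<forall>y\<in>set T_terms. y \<noteq> x \<longrightarrow> term_exp t y mod n \<noteq> term_exp t x mod n"
    using isolation_certificate_imp_isolated[OF isolation_certificate_26] by blast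
  have no_partner: "{y. y \<in> set T_terms \<and> y \<noteq> x \<and> term_exp t y mod n = term_exp t x mod n} = {}"
    using isolated by blast
  have "\<forall>x\<in>set T_terms. term_coeff x \<noteq> 0"
    by (simp add: T_terms_def)
  then have "dominant n t x"
    using x unfolding dominant_iff no_partner by simp
  then show ?thesis
    using x by blast
qed

lemma T_terms_residue_class_13:
  assumes "t mod 13 = 6 \<or> t mod 13 = 12"
  obtains x y where "x \<noteq> y" "term_exp t y = term_exp t x + 13"
    "{z \<in> set T_terms. term_exp t z mod 13 = term_exp t x mod 13} = {x, y}"
    "term_coeff x ^ 2 = term_coeff y ^ 2" "term_coeff y \<noteq> 0"
proof -
  have residue_class: "{z \<in> set T_terms. term_exp t z mod 13 = term_exp t x mod 13}
      = set (filter (\<lambda>z. term_exp (t mod 13) z mod 13 = term_exp (t mod 13) x mod 13) T_terms)" for x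
    by (auto simp: term_exp_mod[of t])
  from assms show thesis
  proof
    assume "t mod 13 = 6"
    moreover have "filter (\<lambda>z. term_exp 6 z mod 13 = term_exp 6 (-1, 4, 8) mod 13) T_terms
        = [(-1, 4, 21), (-1, 4, 8)]"
      by (simp add: T_terms_def)
    ultimately show thesis
      using that[of "(-1, 4, 8)" "(-1, 4, 21)"] residue_class[of "(-1, 4, 8)"] by auto
  next
    assume "t mod 13 = 12"
    moreover have "filter (\<lambda>z. term_exp 12 z mod 13 = term_exp 12 (1, 4, 7) mod 13) T_terms
        = [(-1, 4, 20), (1, 4, 7)]"
      by (simp add: T_terms_def)
    ultimately show thesis
      using that[of "(1, 4, 7)" "(-1, 4, 20)"] residue_class[of "(1, 4, 7)"] by auto
  qed
qed

lemma prime_power2_dvd_if_dvd_rad_quotient: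
  assumes "prime p" "p dvd b div rad b"
  shows "p ^ 2 dvd b"
proof (cases "b = 0")
  case False
  have b: "b = b div rad b * rad b"
    using rad_dvd[of b] by simp
  then have "p dvd rad b"
    using assms False prime_dvd_rad by (metis dvd_mult2)
  then show ?thesis
    using assms(2) b by (metis mult_dvd_mono power2_eq_square)
qed simp

lemma prime_13: "prime (13 :: nat)"
  by code_simp

lemma rad_quotient_13_residues:
  assumes "0 < b" "cyclotomic b dvd T_poly t" "b div rad b = 13"
  shows "t mod 13 \<noteq> 6 \<and> t mod 13 \<noteq> 12"
proof (rule ccontr)
  assume "\<not> ?thesis"
  then have "t mod 13 = 6 \<or> t mod 13 = 12"
    by blast
  then obtain x y where "x \<noteq> y" "term_exp t y = term_exp t x + 13"
      and residue_class: "{z \<in> set T_terms. term_exp t z mod 13 = term_exp t x mod 13} = {x, y}"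
      and coeffs: "term_coeff x ^ 2 = term_coeff y ^ 2" "term_coeff y \<noteq> 0"
    by (rule T_terms_residue_class_13)
  have "b dvd 2 * 13"
  proof (rule two_term_residue_class_dvd[where c = "\<lambda>x. of_int (term_coeff x)" and e = "term_exp t",
        OF assms(1,2) finite_set poly_T_poly])
    show "{j \<in> set T_terms. term_exp t j mod (b div rad b) = term_exp t x mod (b div rad b)} = {x, y}"
      using residue_class by (simp only: assms(3))
    show "(of_int (term_coeff x) :: complex) ^ 2 = of_int (term_coeff y) ^ 2"
      using coeffs(1) by (metis of_int_power)
  qed (use \<open>x \<noteq> y\<close> \<open>term_exp t y = term_exp t x + 13\<close> coeffs(2) in simp_all)
  moreover have "13 ^ 2 dvd b"
    using assms(3) prime_power2_dvd_if_dvd_rad_quotient[of 13 b] by (simp add: prime_13)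
  ultimately have "13 ^ 2 dvd (2 * 13 :: nat)"
    by (metis dvd_trans)
  then show False
    by simp
qed

theorem mainTheorem9:
  fixes t b :: nat
  assumes "b \<ge> 1"
    and "cyclotomic b dvd T_poly t"
  shows "real b / real (rad b) < 13"
proof -
  define n where "n = b div rad b"
  have "0 < b"
    using assms(1) by simp
  have "n < 13"
  proof (rule ccontr)
    assume "\<not> n < 13"
    moreover have "n = 13 \<longrightarrow> t mod 13 \<noteq> 6 \<and> t mod 13 \<noteq> 12"
      using rad_quotient_13_residues[OF \<open>0 < b\<close> assms(2)] by (simp add: n_def)
    ultimately obtain x where "x \<in> set T_terms" "dominant n t x"
      using exists_dominant_term by (meson not_less)
    then show False
      using not_dominant[OF \<open>0 < b\<close> assms(2)] by (simp add: n_def)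
  qed
  moreover have "real b / real (rad b) = real n"
    by (simp add: n_def real_of_nat_div[OF rad_dvd])
  ultimately show ?thesis
    by simp
qed

end
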